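(* Let $A:\mathbb{R}^n\to\mathbb{R}^m$ be a bounded linear operator, let $u^\dagger\in\mathbb{R}^n$, $v:=Au^\dagger$, let $\wp>0$ and assume $\|u^\dagger-u_0\|\le\wp$ where $u_0=\Psi(v)$. Let $\{u_k\}_{k\ge0}$ be the iterates of the IRMGL+$\Psi$ iteration with exact data described in the context, and assume $$C_0:=\eta-\nu_0(\wp+\nu_1)-\eta_0\eta_1>0.$$ Then $\|u_k-u^\dagger\|\le\wp$ for all $k\ge0$, $$\|u_{k+1}-u^\dagger\|^2-\|u_k-u^\dagger\|^2\le-2C_0\|Au_k-v\|^2\quad\text{for all }k\ge0,$$ the sequence $\{\|u_k-u^\dagger\|\}_{k\ge0}$ is monotonically decreasing, and $$\sum_{k=0}^\infty\|Au_k-v\|^2\le\frac{1}{2C_0}\|u_0-u^\dagger\|^2<\infty;$$ in particular $\|Au_k-v\|\to0$ as $k\to\infty$.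
   Context: All norms are Euclidean norms, $A^*=A^\top$. Vectors $u\in\mathbb{R}^n$ are images: $n=pq$, pixel set $S=\{(i,j):1\le i\le p,1\le j\le q\}$, $u$ identified with $u:S\to\mathbb{R}$. Graph Laplacian built from $u$: fix $R>0$, $\sigma>0$, a distance $\eth$ on $S$; $g(a,b)=1$ if $0<\eth(a,b)\le R$, else $0$; $h_u(a,b)=\exp(-|u(a)-u(b)|^2/\sigma)$; $w_u=g\,h_u$; $W_u=[w_u(a,b)]$, $D_u=\mathrm{diag}(\sum_b w_u(a,b))$, $\Delta_u=D_u-W_u$. Exact-data iteration: for a map $\Psi:\mathbb{R}^m\to\mathbb{R}^n$, $u_0=\Psi(v)$, $u_{k+1}=u_k-\alpha_kA^*(Au_k-v)-\beta_k\Delta_{u_k}u_k$, where with constants $\eta_0,\eta_1,\nu_0,\nu_1,\nu_2>0$: $\alpha_k=\min\{\eta_0\|Au_k-v\|^2/\|A^*(Au_k-v)\|^2,\eta_1\}$ when $Au_k\ne v$ (when $Au_k=v$ the term $\alpha_kA^*(Au_k-v)$ vanishes); $\beta_k=\min\{\nu_0\|Au_k-v\|^2/\|\Delta_{u_k}u_k\|,\nu_1/\|\Delta_{u_k}u_k\|,\nu_2\}$ if $\Delta_{u_k}u_k\ne0$, else $\beta_k=0$. $\eta$ is a fixed constant with $0<\eta\le\min\{\eta_0/\|A\|^2,\eta_1\}$. *)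

theory Defs
  imports "HOL-Analysis.Analysis"
begin

definition is_distance :: "('a \<Rightarrow> 'a \<Rightarrow> real) \<Rightarrow> bool" where
  "is_distance d \<longleftrightarrow>
     (\<forall>a b. d a b \<ge> 0) \<and> (\<forall>a b. d a b = 0 \<longleftrightarrow> a = b) \<and>
     (\<forall>a b. d a b = d b a) \<and> (\<forall>a b c. d a c \<le> d a b + d b c)"

definition nbh_g :: "('a \<Rightarrow> 'a \<Rightarrow> real) \<Rightarrow> real \<Rightarrow> 'a \<Rightarrow> 'a \<Rightarrow> real" where
  "nbh_g eth R a b = (if 0 < eth a b \<and> eth a b \<le> R then 1 else 0)"

definition weight_h :: "real \<Rightarrow> real^'a \<Rightarrow> 'a \<Rightarrow> 'a \<Rightarrow> real" where
  "weight_h \<sigma> u a b = exp (- (\<bar>u $ a - u $ b\<bar>)\<^sup>2 / \<sigma>)"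

definition weight_w :: "('a \<Rightarrow> 'a \<Rightarrow> real) \<Rightarrow> real \<Rightarrow> real \<Rightarrow> real^'a \<Rightarrow> 'a \<Rightarrow> 'a \<Rightarrow> real" where
  "weight_w eth R \<sigma> u a b = nbh_g eth R a b * weight_h \<sigma> u a b"

definition W_mat :: "('a::finite \<Rightarrow> 'a \<Rightarrow> real) \<Rightarrow> real \<Rightarrow> real \<Rightarrow> real^'a \<Rightarrow> real^'a^'a" where
  "W_mat eth R \<sigma> u = (\<chi> a b. weight_w eth R \<sigma> u a b)"

definition D_mat :: "('a::finite \<Rightarrow> 'a \<Rightarrow> real) \<Rightarrow> real \<Rightarrow> real \<Rightarrow> real^'a \<Rightarrow> real^'a^'a" where
  "D_mat eth R \<sigma> u = (\<chi> a b. if a = b then (\<Sum>c\<in>UNIV. weight_w eth R \<sigma> u a c) else 0)"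

definition graph_laplacian :: "('a::finite \<Rightarrow> 'a \<Rightarrow> real) \<Rightarrow> real \<Rightarrow> real \<Rightarrow> real^'a \<Rightarrow> real^'a^'a" where
  "graph_laplacian eth R \<sigma> u = D_mat eth R \<sigma> u - W_mat eth R \<sigma> u"

definition irmgl_step ::
  "real^'n^'m \<Rightarrow> real^'m \<Rightarrow> real \<Rightarrow> real \<Rightarrow> real \<Rightarrow> real \<Rightarrow> real \<Rightarrow>
   ('n::finite \<Rightarrow> 'n \<Rightarrow> real) \<Rightarrow> real \<Rightarrow> real \<Rightarrow> real^'n \<Rightarrow> real^'n" where
  "irmgl_step A v \<eta>0 \<eta>1 \<nu>0 \<nu>1 \<nu>2 eth R \<sigma> u =
     (let r = A *v u - v;
          L = graph_laplacian eth R \<sigma> u *v u;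
          \<alpha> = (if r = 0 then 0
               else min (\<eta>0 * (norm r)\<^sup>2 / (norm (transpose A *v r))\<^sup>2) \<eta>1);
          \<beta> = (if L = 0 then 0
               else min (min (\<nu>0 * (norm r)\<^sup>2 / norm L) (\<nu>1 / norm L)) \<nu>2)
      in u - \<alpha> *\<^sub>R (transpose A *v r) - \<beta> *\<^sub>R L)"

definition irmgl_iter ::
  "real^'n^'m \<Rightarrow> (real^'m \<Rightarrow> real^'n) \<Rightarrow> real^'m \<Rightarrow> real \<Rightarrow> real \<Rightarrow> real \<Rightarrow> real \<Rightarrow> real \<Rightarrow>
   ('n::finite \<Rightarrow> 'n \<Rightarrow> real) \<Rightarrow> real \<Rightarrow> real \<Rightarrow> nat \<Rightarrow> real^'n" where
  "irmgl_iter A \<Psi> v \<eta>0 \<eta>1 \<nu>0 \<nu>1 \<nu>2 eth R \<sigma> k =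
     ((irmgl_step A v \<eta>0 \<eta>1 \<nu>0 \<nu>1 \<nu>2 eth R \<sigma>) ^^ k) (\<Psi> v)"

end

theory Submission
  imports Defs
begin

(* Write e\<^sub>k = u\<^sub>k - u\<dagger> and r\<^sub>k = A u\<^sub>k - v = A e\<^sub>k. Since \<langle>e\<^sub>k, A\<^sup>T r\<^sub>k\<rangle> = \<parallel>r\<^sub>k\<parallel>\<^sup>2 and the adaptive step
  size satisfies \<eta> \<le> \<alpha>\<^sub>k \<le> \<eta>\<^sub>1 and \<alpha>\<^sub>k \<parallel>A\<^sup>T r\<^sub>k\<parallel>\<^sup>2 \<le> \<eta>\<^sub>0 \<parallel>r\<^sub>k\<parallel>\<^sup>2, the Landweber part of a step decreases \<parallel>e\<parallel>\<^sup>2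
  by at least (2\<eta> - \<eta>\<^sub>0\<eta>\<^sub>1) \<parallel>r\<^sub>k\<parallel>\<^sup>2. The Laplacian correction \<beta>\<^sub>k \<Delta>u\<^sub>k has length at most
  min(\<nu>\<^sub>0 \<parallel>r\<^sub>k\<parallel>\<^sup>2, \<nu>\<^sub>1), so while the iterate stays in the \<wp>-ball around u\<dagger> it costs at most
  \<nu>\<^sub>0 (2\<wp> + \<nu>\<^sub>1) \<parallel>r\<^sub>k\<parallel>\<^sup>2. The net decrease 2 C\<^sub>0 \<parallel>r\<^sub>k\<parallel>\<^sup>2 keeps the iterates in the ball by induction,
  and telescoping it bounds the series of squared residuals. *)

definition landweber_stepsize ::
  "real \<Rightarrow> real \<Rightarrow> 'a::real_normed_vector \<Rightarrow> 'b::real_normed_vector \<Rightarrow> real" where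
  "landweber_stepsize \<eta>0 \<eta>1 r g =
     (if r = 0 then 0 else min (\<eta>0 * (norm r)\<^sup>2 / (norm g)\<^sup>2) \<eta>1)"

definition laplacian_stepsize ::
  "real \<Rightarrow> real \<Rightarrow> real \<Rightarrow> 'a::real_normed_vector \<Rightarrow> 'b::real_normed_vector \<Rightarrow> real" where
  "laplacian_stepsize \<nu>0 \<nu>1 \<nu>2 r L =
     (if L = 0 then 0 else min (min (\<nu>0 * (norm r)\<^sup>2 / norm L) (\<nu>1 / norm L)) \<nu>2)"

lemma irmgl_step_eq:
  "irmgl_step A v \<eta>0 \<eta>1 \<nu>0 \<nu>1 \<nu>2 eth R \<sigma> u =
     u - landweber_stepsize \<eta>0 \<eta>1 (A *v u - v) (transpose A *v (A *v u - v))
           *\<^sub>R (transpose A *v (A *v u - v))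
       - laplacian_stepsize \<nu>0 \<nu>1 \<nu>2 (A *v u - v) (graph_laplacian eth R \<sigma> u *v u)
           *\<^sub>R (graph_laplacian eth R \<sigma> u *v u)"
  unfolding irmgl_step_def landweber_stepsize_def laplacian_stepsize_def Let_def by simp

lemma landweber_stepsize_nonneg: "0 \<le> \<eta>0 \<Longrightarrow> 0 \<le> \<eta>1 \<Longrightarrow> 0 \<le> landweber_stepsize \<eta>0 \<eta>1 r g"
  unfolding landweber_stepsize_def by simp

lemma landweber_stepsize_le: "0 \<le> \<eta>1 \<Longrightarrow> landweber_stepsize \<eta>0 \<eta>1 r g \<le> \<eta>1"
  unfolding landweber_stepsize_def by simp

lemma landweber_stepsize_mult_norm_le:
  assumes "0 \<le> \<eta>0"
  shows "landweber_stepsize \<eta>0 \<eta>1 r g * (norm g)\<^sup>2 \<le> \<eta>0 * (norm r)\<^sup>2"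
proof (cases "r = 0 \<or> g = 0")
  case True
  then show ?thesis using assms unfolding landweber_stepsize_def by auto
next
  case False
  then have "landweber_stepsize \<eta>0 \<eta>1 r g \<le> \<eta>0 * (norm r)\<^sup>2 / (norm g)\<^sup>2"
    unfolding landweber_stepsize_def by simp
  then show ?thesis using False by (simp add: pos_le_divide_eq)
qed

lemma landweber_stepsize_ge:
  assumes "r \<noteq> 0" "g \<noteq> 0" "\<eta> * (norm g)\<^sup>2 \<le> \<eta>0 * (norm r)\<^sup>2" "\<eta> \<le> \<eta>1"
  shows "\<eta> \<le> landweber_stepsize \<eta>0 \<eta>1 r g"
  using assms by (simp add: landweber_stepsize_def pos_le_divide_eq)

lemma laplacian_stepsize_nonneg:
  "0 \<le> \<nu>0 \<Longrightarrow> 0 \<le> \<nu>1 \<Longrightarrow> 0 \<le> \<nu>2 \<Longrightarrow> 0 \<le> laplacian_stepsize \<nu>0 \<nu>1 \<nu>2 r L"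
  unfolding laplacian_stepsize_def by simp

lemma laplacian_stepsize_mult_norm_le:
  assumes "0 \<le> \<nu>0" "0 \<le> \<nu>1"
  shows "laplacian_stepsize \<nu>0 \<nu>1 \<nu>2 r L * norm L \<le> \<nu>0 * (norm r)\<^sup>2"
    and "laplacian_stepsize \<nu>0 \<nu>1 \<nu>2 r L * norm L \<le> \<nu>1"
proof -
  have "laplacian_stepsize \<nu>0 \<nu>1 \<nu>2 r L \<le> \<nu>0 * (norm r)\<^sup>2 / norm L"
    and "laplacian_stepsize \<nu>0 \<nu>1 \<nu>2 r L \<le> \<nu>1 / norm L" if "L \<noteq> 0"
    using that by (simp_all add: laplacian_stepsize_def)
  then show "laplacian_stepsize \<nu>0 \<nu>1 \<nu>2 r L * norm L \<le> \<nu>0 * (norm r)\<^sup>2"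
    and "laplacian_stepsize \<nu>0 \<nu>1 \<nu>2 r L * norm L \<le> \<nu>1"
    using assms by (cases "L = 0"; simp add: pos_le_divide_eq)+
qed

lemma norm_adjoint_le_onorm:
  fixes f :: "'a::real_inner \<Rightarrow> 'b::real_inner"
  assumes "bounded_linear f" and adjoint: "\<And>x y. inner (f x) y = inner x (g y)"
  shows "norm (g y) \<le> onorm f * norm y"
proof (cases "g y = 0")
  case True
  then show ?thesis using onorm_pos_le[OF assms(1)] by simp
next
  case False
  have "norm (g y) * norm (g y) = inner (f (g y)) y"
    by (simp add: adjoint flip: power2_eq_square power2_norm_eq_inner)
  also have "\<dots> \<le> norm (f (g y)) * norm y" by (rule norm_cauchy_schwarz)
  also have "\<dots> \<le> (onorm f * norm y) * norm (g y)"
    using mult_right_mono[OF onorm[OF assms(1), of "g y"] norm_ge_zero[of y]] by (simp add: ac_simps)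
  finally show ?thesis using False by simp
qed

lemma inner_transpose_mult:
  fixes A :: "real^'n::finite^'m::finite"
  shows "inner x (transpose A *v y) = inner (A *v x) y"
  by (metis dot_lmul_matrix inner_commute transpose_matrix_vector)

lemma norm_transpose_mult_le_onorm:
  fixes A :: "real^'n::finite^'m::finite"
  shows "norm (transpose A *v y) \<le> onorm (\<lambda>x. A *v x) * norm y"
  by (rule norm_adjoint_le_onorm[OF matrix_vector_mul_bounded_linear])
     (rule inner_transpose_mult[symmetric])

lemma norm_diff_scaleR_power2:
  "(norm (x - a *\<^sub>R y))\<^sup>2 = (norm x)\<^sup>2 - 2 * a * inner x y + a\<^sup>2 * (norm y)\<^sup>2"
  unfolding power2_norm_eq_inner
  by (simp add: inner_diff_left inner_diff_right inner_commute algebra_simps power2_eq_square)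

(* In the application e is the error u - u\<dagger>, g = A\<^sup>T (A e) and s = \<langle>e, g\<rangle> = \<parallel>A e\<parallel>\<^sup>2. *)
lemma landweber_descent:
  fixes e g :: "'a::real_inner"
  assumes "inner e g = s" "0 \<le> \<alpha>" "\<alpha> \<le> \<eta>1" "\<alpha> * (norm g)\<^sup>2 \<le> \<eta>0 * s" "\<eta> * s \<le> \<alpha> * s"
  shows "(norm (e - \<alpha> *\<^sub>R g))\<^sup>2 \<le> (norm e)\<^sup>2 - (2 * \<eta> - \<eta>0 * \<eta>1) * s"
proof -
  have "0 \<le> \<eta>0 * s"
    using assms(4) mult_nonneg_nonneg[OF assms(2) zero_le_power2[of "norm g"]] by linarith
  have "\<alpha>\<^sup>2 * (norm g)\<^sup>2 = \<alpha> * (\<alpha> * (norm g)\<^sup>2)" by (simp add: power2_eq_square)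
  also have "\<dots> \<le> \<alpha> * (\<eta>0 * s)" using assms(2,4) by (rule mult_left_mono[rotated])
  also have "\<dots> \<le> \<eta>1 * (\<eta>0 * s)" using assms(3) \<open>0 \<le> \<eta>0 * s\<close> by (rule mult_right_mono)
  finally show ?thesis using assms(1,5) by (simp add: norm_diff_scaleR_power2 algebra_simps)
qed

lemma norm_diff_power2_le_perturbation:
  fixes w x :: "'a::real_normed_vector"
  assumes "norm w \<le> \<rho>" "norm x \<le> a" "norm x \<le> b"
  shows "(norm (w - x))\<^sup>2 \<le> (norm w)\<^sup>2 + a * (2 * \<rho> + b)"
proof -
  have "0 \<le> \<rho>" using assms(1) norm_ge_zero order_trans by blast
  then have "norm w * norm x \<le> \<rho> * a" using assms(1,2) by (intro mult_mono) auto
  moreover have "norm x * norm x \<le> a * b"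
    using assms(2,3) by (intro mult_mono) (auto intro: order_trans[OF norm_ge_zero])
  moreover have "norm (w - x) \<le> norm w + norm x" by (rule norm_triangle_ineq4)
  then have "(norm (w - x))\<^sup>2 \<le> (norm w + norm x)\<^sup>2" by (intro power_mono) auto
  ultimately show ?thesis by (simp add: power2_eq_square algebra_simps)
qed

lemma landweber_step_descent:
  fixes A :: "real^'n::finite^'m::finite" and u udag :: "real^'n" and v :: "real^'m"
  defines "r \<equiv> A *v u - v"
  defines "g \<equiv> transpose A *v r"
  assumes "0 \<le> \<eta>0" "0 \<le> \<eta>" "\<eta> * (onorm (\<lambda>x. A *v x))\<^sup>2 \<le> \<eta>0" "\<eta> \<le> \<eta>1"
    and "v = A *v udag"
  shows "(norm (u - landweber_stepsize \<eta>0 \<eta>1 r g *\<^sub>R g - udag))\<^sup>2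
           \<le> (norm (u - udag))\<^sup>2 - (2 * \<eta> - \<eta>0 * \<eta>1) * (norm r)\<^sup>2"
proof -
  have residual: "inner (u - udag) g = (norm r)\<^sup>2"
    unfolding g_def inner_transpose_mult r_def \<open>v = A *v udag\<close>
    by (simp add: matrix_vector_mult_diff_distrib power2_norm_eq_inner)
  have "\<eta> * (norm g)\<^sup>2 \<le> \<eta> * (onorm (\<lambda>x. A *v x) * norm r)\<^sup>2"
    unfolding g_def using \<open>0 \<le> \<eta>\<close> norm_transpose_mult_le_onorm
    by (intro mult_left_mono power_mono) auto
  also have "\<dots> \<le> \<eta>0 * (norm r)\<^sup>2"
    using assms(5) by (simp add: power_mult_distrib mult.assoc[symmetric] mult_right_mono)
  finally have "\<eta> * (norm r)\<^sup>2 \<le> landweber_stepsize \<eta>0 \<eta>1 r g * (norm r)\<^sup>2"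
    using residual \<open>\<eta> \<le> \<eta>1\<close> by (cases "r = 0") (auto intro: mult_right_mono landweber_stepsize_ge)
  then have "(norm ((u - udag) - landweber_stepsize \<eta>0 \<eta>1 r g *\<^sub>R g))\<^sup>2
      \<le> (norm (u - udag))\<^sup>2 - (2 * \<eta> - \<eta>0 * \<eta>1) * (norm r)\<^sup>2"
    using assms(3,4,6)
    by (intro landweber_descent[OF residual] landweber_stepsize_nonneg landweber_stepsize_le
        landweber_stepsize_mult_norm_le) auto
  then show ?thesis by (simp add: algebra_simps)
qed

lemma irmgl_step_descent:
  fixes A :: "real^'n::finite^'m::finite"
  assumes "0 \<le> \<eta>0" "0 \<le> \<nu>0" "0 \<le> \<nu>1" "0 \<le> \<nu>2" "0 \<le> \<eta>"
    and "\<eta> * (onorm (\<lambda>x. A *v x))\<^sup>2 \<le> \<eta>0" "\<eta> \<le> \<eta>1"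
    and C_nonneg: "0 \<le> \<eta> - \<nu>0 * (\<rho> + \<nu>1) - \<eta>0 * \<eta>1"
    and "v = A *v udag" "norm (u - udag) \<le> \<rho>"
  shows "(norm (irmgl_step A v \<eta>0 \<eta>1 \<nu>0 \<nu>1 \<nu>2 eth R \<sigma> u - udag))\<^sup>2
           + 2 * (\<eta> - \<nu>0 * (\<rho> + \<nu>1) - \<eta>0 * \<eta>1) * (norm (A *v u - v))\<^sup>2
         \<le> (norm (u - udag))\<^sup>2"
proof -
  define r where "r = A *v u - v"
  define L where "L = graph_laplacian eth R \<sigma> u *v u"
  define \<beta> where "\<beta> = laplacian_stepsize \<nu>0 \<nu>1 \<nu>2 r L"
  define w where "w = u - landweber_stepsize \<eta>0 \<eta>1 r (transpose A *v r) *\<^sub>R (transpose A *v r) - udag"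
  have step: "irmgl_step A v \<eta>0 \<eta>1 \<nu>0 \<nu>1 \<nu>2 eth R \<sigma> u - udag = w - \<beta> *\<^sub>R L"
    unfolding irmgl_step_eq w_def \<beta>_def r_def L_def by (simp add: algebra_simps)
  have w_le: "(norm w)\<^sup>2 \<le> (norm (u - udag))\<^sup>2 - (2 * \<eta> - \<eta>0 * \<eta>1) * (norm r)\<^sup>2"
    unfolding w_def r_def using assms(1,5-7,9) by (rule landweber_step_descent)
  have "0 \<le> \<rho>" using assms(10) norm_ge_zero order_trans by blast
  then have "0 \<le> \<nu>0 * (\<rho> + \<nu>1)" using assms(2,3) by simp
  then have "0 \<le> (2 * \<eta> - \<eta>0 * \<eta>1) * (norm r)\<^sup>2" using C_nonneg assms(5) by simp
  moreover have "(norm (u - udag))\<^sup>2 \<le> \<rho>\<^sup>2" using assms(10) by (intro power_mono) auto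
  ultimately have "(norm w)\<^sup>2 \<le> \<rho>\<^sup>2" using w_le by linarith
  then have "norm w \<le> \<rho>" using \<open>0 \<le> \<rho>\<close> by (rule power2_le_imp_le)
  moreover have "0 \<le> \<beta>"
    unfolding \<beta>_def using assms(2-4) by (rule laplacian_stepsize_nonneg)
  then have "norm (\<beta> *\<^sub>R L) \<le> \<nu>0 * (norm r)\<^sup>2" "norm (\<beta> *\<^sub>R L) \<le> \<nu>1"
    unfolding \<beta>_def using laplacian_stepsize_mult_norm_le[OF assms(2,3)] by simp_all
  ultimately have "(norm (w - \<beta> *\<^sub>R L))\<^sup>2 \<le> (norm w)\<^sup>2 + \<nu>0 * (norm r)\<^sup>2 * (2 * \<rho> + \<nu>1)"
    by (rule norm_diff_power2_le_perturbation)
  moreover have "0 \<le> (\<eta>0 * \<eta>1 + \<nu>0 * \<nu>1) * (norm r)\<^sup>2"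
    using assms(1-3,5,7) by simp
  ultimately have "(norm (w - \<beta> *\<^sub>R L))\<^sup>2 + 2 * (\<eta> - \<nu>0 * (\<rho> + \<nu>1) - \<eta>0 * \<eta>1) * (norm r)\<^sup>2
      \<le> (norm (u - udag))\<^sup>2"
    using w_le by (simp add: algebra_simps)
  then show ?thesis by (simp only: step r_def)
qed

lemma funpow_stays_in_ball:
  fixes T :: "'a::real_normed_vector \<Rightarrow> 'a" and d :: "'a \<Rightarrow> real"
  assumes descent: "\<And>x. norm (x - c) \<le> \<rho> \<Longrightarrow> (norm (T x - c))\<^sup>2 + d x \<le> (norm (x - c))\<^sup>2"
    and "\<And>x. 0 \<le> d x" and "norm (x0 - c) \<le> \<rho>"
  shows "norm ((T ^^ k) x0 - c) \<le> \<rho>"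
proof (induction k)
  case 0
  then show ?case using assms(3) by simp
next
  case (Suc k)
  have "(norm (T ((T ^^ k) x0) - c))\<^sup>2 \<le> (norm ((T ^^ k) x0 - c))\<^sup>2"
    using descent[OF Suc] assms(2)[of "(T ^^ k) x0"] by linarith
  also have "\<dots> \<le> \<rho>\<^sup>2" using Suc by (intro power_mono) auto
  finally show ?case by (auto intro: power2_le_imp_le order_trans[OF norm_ge_zero Suc])
qed

lemma summable_of_descent:
  fixes D a :: "nat \<Rightarrow> real"
  assumes descent: "\<And>k. D (Suc k) + c * a k \<le> D k"
    and "0 < c" "\<And>k. 0 \<le> a k" "\<And>k. 0 \<le> D k"
  shows "summable a" and "suminf a \<le> D 0 / c"
proof -
  have partial_sums: "(\<Sum>k<n. a k) \<le> D 0 / c" for n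
  proof -
    have "c * (\<Sum>k<n. a k) = (\<Sum>k<n. c * a k)" by (simp add: sum_distrib_left)
    also have "\<dots> \<le> (\<Sum>k<n. D k - D (Suc k))"
      using descent by (intro sum_mono) (simp add: algebra_simps)
    also have "\<dots> = D 0 - D n" by (rule sum_lessThan_telescope')
    also have "\<dots> \<le> D 0" using assms(4) by simp
    finally show ?thesis using \<open>0 < c\<close> by (simp add: pos_le_divide_eq mult.commute)
  qed
  show "summable a" by (rule summableI_nonneg_bounded[OF assms(3) partial_sums])
  then show "suminf a \<le> D 0 / c" by (rule suminf_le_const[OF _ partial_sums])
qed

theorem lemma3p8:
  fixes A :: "real^('p::finite \<times> 'q::finite)^'m::finite"
    and \<Psi> :: "real^'m \<Rightarrow> real^('p \<times> 'q)"
    and udag :: "real^('p \<times> 'q)"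
    and v :: "real^'m"
    and eth :: "'p \<times> 'q \<Rightarrow> 'p \<times> 'q \<Rightarrow> real"
    and R \<sigma> \<eta>0 \<eta>1 \<nu>0 \<nu>1 \<nu>2 \<eta> rho :: real
  defines "u \<equiv> irmgl_iter A \<Psi> v \<eta>0 \<eta>1 \<nu>0 \<nu>1 \<nu>2 eth R \<sigma>"
    and "C0 \<equiv> \<eta> - \<nu>0 * (rho + \<nu>1) - \<eta>0 * \<eta>1"
  assumes dist: "is_distance eth"
    and R_pos: "R > 0" and sigma_pos: "\<sigma> > 0"
    and params_pos: "\<eta>0 > 0" "\<eta>1 > 0" "\<nu>0 > 0" "\<nu>1 > 0" "\<nu>2 > 0"
    and eta_pos: "\<eta> > 0"
    and eta_le0: "\<eta> * (onorm (\<lambda>x. A *v x))\<^sup>2 \<le> \<eta>0"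
    and eta_le1: "\<eta> \<le> \<eta>1"
    and v_def: "v = A *v udag"
    and wp_pos: "rho > 0"
    and init: "norm (udag - \<Psi> v) \<le> rho"
    and C0_pos: "C0 > 0"
  shows "(\<forall>k. norm (u k - udag) \<le> rho)
    \<and> (\<forall>k. (norm (u (Suc k) - udag))\<^sup>2 - (norm (u k - udag))\<^sup>2
             \<le> - 2 * C0 * (norm (A *v u k - v))\<^sup>2)
    \<and> decseq (\<lambda>k. norm (u k - udag))
    \<and> summable (\<lambda>k. (norm (A *v u k - v))\<^sup>2)
    \<and> (\<Sum>k. (norm (A *v u k - v))\<^sup>2) \<le> (norm (u 0 - udag))\<^sup>2 / (2 * C0)
    \<and> (\<lambda>k. norm (A *v u k - v)) \<longlonglongrightarrow> 0"
proof -
  define T where "T = irmgl_step A v \<eta>0 \<eta>1 \<nu>0 \<nu>1 \<nu>2 eth R \<sigma>"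
  have u_eq: "u k = (T ^^ k) (\<Psi> v)" for k unfolding u_def irmgl_iter_def T_def ..
  have descent: "(norm (T x - udag))\<^sup>2 + 2 * C0 * (norm (A *v x - v))\<^sup>2 \<le> (norm (x - udag))\<^sup>2"
    if "norm (x - udag) \<le> rho" for x
    unfolding T_def C0_def
    by (rule irmgl_step_descent[OF _ _ _ _ _ eta_le0 eta_le1 _ v_def that])
       (use params_pos eta_pos C0_pos in \<open>auto simp: C0_def\<close>)
  have close: "norm (u k - udag) \<le> rho" for k
    unfolding u_eq
    by (rule funpow_stays_in_ball[where d = "\<lambda>x. 2 * C0 * (norm (A *v x - v))\<^sup>2", OF descent])
       (use C0_pos init in \<open>simp_all add: norm_minus_commute\<close>)
  have energy: "(norm (u (Suc k) - udag))\<^sup>2 + 2 * C0 * (norm (A *v u k - v))\<^sup>2 \<le> (norm (u k - udag))\<^sup>2"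
    for k using descent[OF close[of k]] unfolding u_eq by simp
  have "(norm (u (Suc k) - udag))\<^sup>2 \<le> (norm (u k - udag))\<^sup>2" for k
    by (rule order_trans[OF _ energy]) (use C0_pos in simp)
  then have "decseq (\<lambda>k. norm (u k - udag))"
    using power2_le_imp_le[OF _ norm_ge_zero] unfolding decseq_Suc_iff by blast
  moreover have "summable (\<lambda>k. (norm (A *v u k - v))\<^sup>2)"
    and "(\<Sum>k. (norm (A *v u k - v))\<^sup>2) \<le> (norm (u 0 - udag))\<^sup>2 / (2 * C0)"
    by (rule summable_of_descent[where D = "\<lambda>k. (norm (u k - udag))\<^sup>2" and c = "2 * C0", OF energy];
        use C0_pos in simp)+
  moreover from this(1) have "(\<lambda>k. sqrt ((norm (A *v u k - v))\<^sup>2)) \<longlonglongrightarrow> sqrt 0"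
    by (intro tendsto_real_sqrt summable_LIMSEQ_zero)
  then have "(\<lambda>k. norm (A *v u k - v)) \<longlonglongrightarrow> 0" by simp
  ultimately show ?thesis using close energy by (auto simp: algebra_simps)
qed

end
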